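(* The function $y\mapsto f_1(yi)$, $y>0$, has exactly one critical point, at $y=1$. Moreover $Y_1(yi)>0$ for $y\in(0,1)$ and $Y_1(yi)<0$ for $y\in(1,\infty)$.
   Context: $\operatorname e(z)=e^{2\pi iz}$, $\eta(z)=\operatorname e(z/6)\prod_{n\ge1}(1-\operatorname e(nz))^4$ for $\operatorname{Im}z>0$, $f_1(z)=\log|\operatorname{Im}(z)\eta(z)|$, and with $z=x+iy$, $Y_1=\partial f_1/\partial y$. *)

theory Defs
  imports "HOL-Analysis.Analysis"
begin

definition e :: "complex \<Rightarrow> complex" where
  "e z = exp (2 * of_real pi * \<i> * z)"

definition eta :: "complex \<Rightarrow> complex" where
  "eta z = e (z / 6) * (\<Prod>n. (1 - e (of_nat (Suc n) * z)) ^ 4)"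

definition f1 :: "complex \<Rightarrow> real" where
  "f1 z = ln (cmod (of_real (Im z) * eta z))"

definition Y1 :: "complex \<Rightarrow> real" where
  "Y1 z = deriv (\<lambda>t. f1 (Complex (Re z) t)) (Im z)"

end

theory Submission
  imports Defs "HOL-Real_Asymp.Real_Asymp"
begin

(*
  On the imaginary axis the product defining eta gives, with q = exp (-2 pi y),
  f1 (i y) = ln y - pi y / 3 + 4 * sum_n ln (1 - q^n), whose derivative
  1/y - pi/3 + 8 pi * sum_n n q^n / (1 - q^n) is strictly decreasing in y. So everything reduces
  to its vanishing at y = 1, i.e. to the Lambert series value
  sum_n n e^(-2 pi n) / (1 - e^(-2 pi n)) = 1/24 - 1/(8 pi).
  Expanding each term as a geometric series and summing the other way round turns this into
  sum_(n>=1) 1 / sinh^2 (pi n) = 1/6 - 1/(2 pi). That value comes from the Eisenstein-type double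
  series of (d^2 - c^2) / (c^2 + d^2)^2 over c >= 1, d in Z, which converges only conditionally;
  subtracting terms that telescope in d makes it absolutely convergent. Summed over d first, the
  partial fraction expansion of 1 / sinh^2 gives -pi^2 times the csch^2 series; summed over c
  first, the expansions of 1 / sinh^2 and coth give zeta 2, +pi^2 times the csch^2 series and a
  telescoping sum of coth values at half integers. Comparing the two orders fixes the sum.
*)

section \<open>Double series and term-wise differentiation\<close>

lemma sums_swap_dominated:
  fixes W :: "nat \<Rightarrow> nat \<Rightarrow> real"
  assumes bound: "\<And>i j. \<bar>W i j\<bar> \<le> a i * b j"
    and a: "summable a" "\<And>i. 0 \<le> a i" and b: "summable b" "\<And>j. 0 \<le> b j"
    and rows: "\<And>i. (\<lambda>j. W i j) sums r i" and cols: "\<And>j. (\<lambda>i. W i j) sums c j"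
  shows "\<exists>S. r sums S \<and> c sums S"
proof -
  have "((\<lambda>j. a i * b j) has_sum a i * suminf b) UNIV" for i
    by (intro has_sum_cmult_right sums_nonneg_imp_has_sum summable_sums b)
  moreover have "(\<lambda>i. a i * suminf b) summable_on UNIV"
    by (intro summable_on_cmult_left summable_nonneg_imp_summable_on a)
  ultimately have "(\<lambda>(i, j). a i * b j) summable_on UNIV \<times> UNIV"
    by (intro summable_on_SigmaI) (use a(2) b(2) in auto)
  then have "(\<lambda>p. norm ((\<lambda>(i, j). W i j) p)) summable_on UNIV \<times> UNIV"
    using bound by (intro Infinite_Sum.abs_summable_on_comparison_test'[where f = "\<lambda>(i, j). W i j"]) auto
  then obtain S where S: "((\<lambda>(i, j). W i j) has_sum S) (UNIV \<times> UNIV)"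
    using abs_summable_summable summable_on_def by blast
  have row_dom: "summable (\<lambda>j. norm (W i j))" for i
    by (rule summable_comparison_test'[OF summable_mult[OF b(1)], of 0]) (use bound in simp)
  have col_dom: "summable (\<lambda>i. norm (W i j))" for j
    by (rule summable_comparison_test'[OF summable_mult2[OF a(1)], of 0]) (use bound in simp)
  have "(r has_sum S) UNIV"
    by (rule has_sum_SigmaD[OF S]) (use norm_summable_imp_has_sum[OF row_dom rows] in auto)
  moreover have "(c has_sum S) UNIV"
  proof (rule has_sum_SigmaD)
    show "((\<lambda>(j, i). W i j) has_sum S) (UNIV \<times> UNIV)"
      using S has_sum_swap[where f = "\<lambda>(i, j). W i j" and A = UNIV and B = UNIV] by simp
  qed (use norm_summable_imp_has_sum[OF col_dom cols] in auto)
  ultimately show ?thesis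
    using has_sum_imp_sums by blast
qed

lemma has_real_derivative_suminf:
  fixes f f' :: "nat \<Rightarrow> real \<Rightarrow> real"
  assumes "open S" "convex S" "x \<in> S" "x0 \<in> S"
    and "\<And>n y. y \<in> S \<Longrightarrow> (f n has_real_derivative f' n y) (at y)"
    and bound: "\<And>n y. y \<in> S \<Longrightarrow> \<bar>f' n y\<bar> \<le> M n" and "summable M"
    and "summable (\<lambda>n. f n x0)"
  shows "((\<lambda>y. \<Sum>n. f n y) has_real_derivative (\<Sum>n. f' n x)) (at x)"
proof (rule has_field_derivative_series'(2)[of S f f' x0 x])
  show "uniformly_convergent_on S (\<lambda>n y. \<Sum>i<n. f' i y)"
    using bound \<open>summable M\<close> by (intro Weierstrass_m_test') auto
qed (use assms in \<open>auto intro: has_field_derivative_at_within simp: interior_open\<close>)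

section \<open>Partial fractions of coth and csch\<open>\<^sup>2\<close>\<close>

text \<open>The Mittag-Leffler series of \<open>\<pi> coth (\<pi> x) - 1/x\<close> and of its derivative \<open>1/x\<^sup>2 - \<pi>\<^sup>2 / sinh\<^sup>2 (\<pi> x)\<close>.\<close>

definition coth_pf_term :: "nat \<Rightarrow> real \<Rightarrow> real" where
  "coth_pf_term k x = 2 * x / (x\<^sup>2 + (real (Suc k))\<^sup>2)"

definition csch_pf_term :: "nat \<Rightarrow> real \<Rightarrow> real" where
  "csch_pf_term k x = 2 * ((real (Suc k))\<^sup>2 - x\<^sup>2) / (x\<^sup>2 + (real (Suc k))\<^sup>2)\<^sup>2"

definition coth_pf :: "real \<Rightarrow> real" where
  "coth_pf x = (\<Sum>k. coth_pf_term k x)"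

definition csch_pf :: "real \<Rightarrow> real" where
  "csch_pf x = (\<Sum>k. csch_pf_term k x)"

lemma has_real_derivative_ln_sinh_factor:
  "((\<lambda>x. ln (1 + x\<^sup>2 / (real (Suc k))\<^sup>2)) has_real_derivative coth_pf_term k x) (at x)"
proof -
  define M where "M = (real (Suc k))\<^sup>2"
  have M: "M > 0"
    unfolding M_def by simp
  then have "((\<lambda>x. ln (1 + x\<^sup>2 / M)) has_real_derivative 1 / (1 + x\<^sup>2 / M) * (2 * x / M)) (at x)"
    by (auto intro!: derivative_eq_intros simp: add_pos_nonneg)
  also have "1 / (1 + x\<^sup>2 / M) * (2 * x / M) = coth_pf_term k x"
    using M by (simp add: coth_pf_term_def M_def field_simps add_pos_nonneg)
  finally show ?thesis
    unfolding M_def .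
qed

lemma has_real_derivative_coth_pf_term:
  "(coth_pf_term k has_real_derivative csch_pf_term k x) (at x)"
proof -
  define M where "M = (real (Suc k))\<^sup>2"
  have "x\<^sup>2 + M > 0"
    unfolding M_def by (simp add: add_nonneg_pos)
  then have "((\<lambda>x. 2 * x / (x\<^sup>2 + M)) has_real_derivative
      (2 * (x\<^sup>2 + M) - 2 * x * (2 * x)) / (x\<^sup>2 + M)\<^sup>2) (at x)"
    by (auto intro!: derivative_eq_intros simp: power2_eq_square)
  also have "(2 * (x\<^sup>2 + M) - 2 * x * (2 * x)) / (x\<^sup>2 + M)\<^sup>2 = csch_pf_term k x"
    by (simp add: csch_pf_term_def M_def power2_eq_square algebra_simps)
  finally show ?thesis
    unfolding coth_pf_term_def[abs_def] M_def .
qed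

lemma abs_coth_pf_term_le:
  assumes "\<bar>x\<bar> \<le> B"
  shows "\<bar>coth_pf_term k x\<bar> \<le> 2 * B / (real (Suc k))\<^sup>2"
proof -
  have "\<bar>coth_pf_term k x\<bar> = 2 * \<bar>x\<bar> / (x\<^sup>2 + (real (Suc k))\<^sup>2)"
    unfolding coth_pf_term_def by (simp add: abs_mult add_nonneg_pos)
  also have "\<dots> \<le> 2 * \<bar>x\<bar> / (real (Suc k))\<^sup>2"
    by (intro divide_left_mono) (auto intro!: mult_pos_pos add_nonneg_pos)
  also have "\<dots> \<le> 2 * B / (real (Suc k))\<^sup>2"
    using assms by (simp add: divide_right_mono)
  finally show ?thesis .
qed

lemma abs_csch_pf_term_le: "\<bar>csch_pf_term k x\<bar> \<le> 2 / (real (Suc k))\<^sup>2"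
proof -
  define D where "D = x\<^sup>2 + (real (Suc k))\<^sup>2"
  have D: "(real (Suc k))\<^sup>2 \<le> D" "0 < D"
    unfolding D_def by (simp_all add: add_nonneg_pos)
  have "\<bar>(real (Suc k))\<^sup>2 - x\<^sup>2\<bar> \<le> D"
    unfolding D_def abs_le_iff using zero_le_power2[of x] zero_le_power2[of "real (Suc k)"] by linarith
  then have "\<bar>csch_pf_term k x\<bar> \<le> 2 * D / D\<^sup>2"
    unfolding csch_pf_term_def D_def[symmetric] by (simp add: abs_mult divide_right_mono)
  also have "\<dots> = 2 / D"
    using D by (simp add: power2_eq_square)
  also have "\<dots> \<le> 2 / (real (Suc k))\<^sup>2"
    using D by (intro divide_left_mono) auto
  finally show ?thesis .
qed

lemma summable_inverse_Suc_squared: "summable (\<lambda>k. 1 / (real (Suc k))\<^sup>2)"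
  using inverse_squares_sums sums_summable by (simp add: add.commute)

lemma summable_coth_pf_term: "summable (\<lambda>k. coth_pf_term k x)"
  by (rule summable_comparison_test'[OF summable_mult[OF summable_inverse_Suc_squared, of "2 * \<bar>x\<bar>"], of 0])
     (use abs_coth_pf_term_le[of x "\<bar>x\<bar>"] in simp)

lemma summable_csch_pf_term: "summable (\<lambda>k. csch_pf_term k x)"
  by (rule summable_comparison_test'[OF summable_mult[OF summable_inverse_Suc_squared, of 2], of 0])
     (use abs_csch_pf_term_le in simp)

lemma has_real_derivative_ln_sinh_series:
  "((\<lambda>x. \<Sum>k. ln (1 + x\<^sup>2 / (real (Suc k))\<^sup>2)) has_real_derivative coth_pf x) (at x)"
  unfolding coth_pf_def
proof (rule has_real_derivative_suminf[of "ball 0 (\<bar>x\<bar> + 1)" _ 0])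
  show "summable (\<lambda>k. 2 * (\<bar>x\<bar> + 1) * (1 / (real (Suc k))\<^sup>2))"
    by (rule summable_mult[OF summable_inverse_Suc_squared])
  show "\<bar>coth_pf_term k y\<bar> \<le> 2 * (\<bar>x\<bar> + 1) * (1 / (real (Suc k))\<^sup>2)"
    if "y \<in> ball 0 (\<bar>x\<bar> + 1)" for k y
    using abs_coth_pf_term_le[of y "\<bar>x\<bar> + 1" k] that by simp
qed (auto intro: has_real_derivative_ln_sinh_factor simp del: of_nat_Suc)

lemma has_real_derivative_coth_pf: "(coth_pf has_real_derivative csch_pf x) (at x)"
proof -
  have "((\<lambda>x. \<Sum>k. coth_pf_term k x) has_real_derivative (\<Sum>k. csch_pf_term k x)) (at x)"
    by (rule has_real_derivative_suminf[of UNIV _ x _ _ "\<lambda>k. 2 / (real (Suc k))\<^sup>2"])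
       (use summable_mult[OF summable_inverse_Suc_squared, of 2] in
         \<open>auto intro: has_real_derivative_coth_pf_term abs_csch_pf_term_le summable_coth_pf_term
           simp del: of_nat_Suc\<close>)
  then show ?thesis
    unfolding coth_pf_def[abs_def] csch_pf_def .
qed

lemma coth_pf_minus: "coth_pf (- x) = - coth_pf x"
  unfolding coth_pf_def using suminf_minus[OF summable_coth_pf_term[of x]]
  by (simp add: coth_pf_term_def)

lemma sums_ln_sinh_div:
  assumes x: "x > 0"
  shows "(\<lambda>k. ln (1 + x\<^sup>2 / (real (Suc k))\<^sup>2)) sums ln (sinh (pi * x) / (pi * x))"
proof -
  let ?z = "\<i> * complex_of_real x"
  have nz: "of_real pi * ?z \<noteq> 0"
    using x by simp
  have "(\<lambda>n. (of_real pi * ?z * (\<Prod>k=1..n. 1 - ?z\<^sup>2 / of_nat k ^ 2)) / (of_real pi * ?z))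
      \<longlonglongrightarrow> sin (of_real pi * ?z) / (of_real pi * ?z)"
    by (intro tendsto_divide sin_product_formula_complex tendsto_const nz)
  moreover have "(of_real pi * ?z * (\<Prod>k=1..n. 1 - ?z\<^sup>2 / of_nat k ^ 2)) / (of_real pi * ?z)
      = complex_of_real (\<Prod>k=1..n. 1 + x\<^sup>2 / (real k)\<^sup>2)" for n
    using nz by (simp add: power_mult_distrib)
  moreover have "sin (of_real pi * ?z) / (of_real pi * ?z) = complex_of_real (sinh (pi * x) / (pi * x))"
  proof -
    have "sin (of_real pi * ?z) = \<i> * sinh (of_real (pi * x))"
      using sinh_conv_sin[of "of_real (pi * x) :: complex"] by (simp add: mult.commute mult.left_commute)
    also have "sinh (of_real (pi * x) :: complex) = of_real (sinh (pi * x))"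
      unfolding sinh_field_def by (simp flip: exp_of_real)
    finally show ?thesis
      using nz by (simp add: field_simps)
  qed
  ultimately have "(\<lambda>n. \<Prod>k=1..n. 1 + x\<^sup>2 / (real k)\<^sup>2) \<longlonglongrightarrow> sinh (pi * x) / (pi * x)"
    by (simp only: tendsto_of_real_iff)
  then have "(\<lambda>n. ln (\<Prod>k=1..n. 1 + x\<^sup>2 / (real k)\<^sup>2)) \<longlonglongrightarrow> ln (sinh (pi * x) / (pi * x))"
    by (rule tendsto_ln) (use x in simp)
  moreover have "ln (\<Prod>k=1..n. 1 + x\<^sup>2 / (real k)\<^sup>2) = (\<Sum>k<n. ln (1 + x\<^sup>2 / (real (Suc k))\<^sup>2))" for n
  proof -
    have "ln (\<Prod>k=1..n. 1 + x\<^sup>2 / (real k)\<^sup>2) = (\<Sum>k=1..n. ln (1 + x\<^sup>2 / (real k)\<^sup>2))"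
      by (intro ln_prod) (auto simp: add_nonneg_eq_0_iff)
    also have "\<dots> = (\<Sum>k<n. ln (1 + x\<^sup>2 / (real (Suc k))\<^sup>2))"
      using sum_bounds_lt_plus1[of "\<lambda>k. ln (1 + x\<^sup>2 / (real k)\<^sup>2)" n] by simp
    finally show ?thesis .
  qed
  ultimately show ?thesis
    unfolding sums_def by simp
qed

lemma coth_pf_eq:
  assumes "x > 0"
  shows "coth_pf x = pi * cosh (pi * x) / sinh (pi * x) - 1 / x"
proof -
  let ?G = "\<lambda>y. ln (sinh (pi * y)) - ln (pi * y)"
  have "(?G has_real_derivative pi * cosh (pi * x) / sinh (pi * x) - 1 / x) (at x)"
    by (rule derivative_eq_intros refl | use assms in simp)+
  moreover have "(?G has_real_derivative coth_pf x) (at x)"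
  proof (rule has_field_derivative_transform_within_open[OF has_real_derivative_ln_sinh_series])
    show "(\<Sum>k. ln (1 + y\<^sup>2 / (real (Suc k))\<^sup>2)) = ?G y" if "y \<in> {0<..}" for y
      using sums_unique[OF sums_ln_sinh_div] that by (simp add: ln_div)
  qed (use assms in auto)
  ultimately show ?thesis
    using DERIV_unique by blast
qed

lemma csch_pf_eq:
  assumes x: "x > 0"
  shows "csch_pf x = 1 / x\<^sup>2 - pi\<^sup>2 / (sinh (pi * x))\<^sup>2"
proof -
  let ?H = "\<lambda>y. pi * cosh (pi * y) / sinh (pi * y) - 1 / y"
  define S C where "S = sinh (pi * x)" and "C = cosh (pi * x)"
  have S: "S \<noteq> 0"
    unfolding S_def using x by simp
  have "(?H has_real_derivative (pi * (S * pi) * S - pi * C * (C * pi)) / (S * S) + 1 / (x * x)) (at x)"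
    unfolding S_def C_def by (rule derivative_eq_intros refl | use x S S_def in simp)+
  also have "(pi * (S * pi) * S - pi * C * (C * pi)) / (S * S) + 1 / (x * x) = 1 / x\<^sup>2 - pi\<^sup>2 / S\<^sup>2"
  proof -
    have "pi * (S * pi) * S - pi * C * (C * pi) = pi\<^sup>2 * (S\<^sup>2 - C\<^sup>2)"
      by (simp add: power2_eq_square algebra_simps)
    also have "\<dots> = - pi\<^sup>2"
      using cosh_square_eq[of "pi * x"] unfolding S_def[symmetric] C_def[symmetric] by simp
    finally show ?thesis
      by (simp add: power2_eq_square)
  qed
  finally have "(?H has_real_derivative 1 / x\<^sup>2 - pi\<^sup>2 / S\<^sup>2) (at x)" .
  moreover have "(?H has_real_derivative csch_pf x) (at x)"
    by (rule has_field_derivative_transform_within_open[OF has_real_derivative_coth_pf, of "{0<..}"])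
       (use x coth_pf_eq in auto)
  ultimately show ?thesis
    unfolding S_def by (metis DERIV_unique)
qed

lemma coth_pf_half_integer_tendsto: "(\<lambda>j. coth_pf (real j + 1/2)) \<longlonglongrightarrow> pi"
proof -
  have "(\<lambda>j::nat. pi * cosh (pi * (real j + 1/2)) / sinh (pi * (real j + 1/2)) - 1 / (real j + 1/2))
      \<longlonglongrightarrow> pi"
    unfolding cosh_field_def sinh_field_def by real_asymp
  then show ?thesis
    by (simp add: coth_pf_eq add_pos_nonneg)
qed

section \<open>The sum of \<open>1 / sinh\<^sup>2 (\<pi> n)\<close>\<close>

definition eisenstein_term :: "real \<Rightarrow> real \<Rightarrow> real" where
  "eisenstein_term c d = (d\<^sup>2 - c\<^sup>2) / (c\<^sup>2 + d\<^sup>2)\<^sup>2"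

definition telescope_term :: "real \<Rightarrow> real \<Rightarrow> real" where
  "telescope_term c d = (d - 1/2) / (c\<^sup>2 + (d - 1/2)\<^sup>2) - (d + 1/2) / (c\<^sup>2 + (d + 1/2)\<^sup>2)"

text \<open>Weights that fold a sum over \<open>j \<in> \<int>\<close> of a function even in \<open>j\<close> into a sum over \<open>j \<in> \<nat>\<close>.\<close>
definition sym_weight :: "nat \<Rightarrow> real" where
  "sym_weight j = (if j = 0 then 1 else 2)"

definition regularized_eisenstein :: "nat \<Rightarrow> nat \<Rightarrow> real" where
  "regularized_eisenstein i j =
     sym_weight j * (eisenstein_term (real (Suc i)) (real j) - telescope_term (real (Suc i)) (real j))"

lemma eisenstein_minus_telescope_eq:
  fixes c d :: real
  assumes "c \<noteq> 0"
  defines "R \<equiv> c\<^sup>2 + d\<^sup>2"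
  shows "eisenstein_term c d - telescope_term c d =
    ((d\<^sup>2 - c\<^sup>2) * (R/2 + 1/16 - d\<^sup>2) + R\<^sup>2/4) / (R\<^sup>2 * ((c\<^sup>2 + (d - 1/2)\<^sup>2) * (c\<^sup>2 + (d + 1/2)\<^sup>2)))"
proof -
  define P1 P2 where "P1 = c\<^sup>2 + (d - 1/2)\<^sup>2" and "P2 = c\<^sup>2 + (d + 1/2)\<^sup>2"
  have pos: "P1 > 0" "P2 > 0" "R > 0"
    unfolding P1_def P2_def R_def using assms by (simp_all add: add_pos_nonneg)
  have "telescope_term c d = ((d - 1/2) * P2 - (d + 1/2) * P1) / (P1 * P2)"
    unfolding telescope_term_def P1_def[symmetric] P2_def[symmetric] using pos by (simp add: diff_frac_eq)
  also have "(d - 1/2) * P2 - (d + 1/2) * P1 = d\<^sup>2 - c\<^sup>2 - 1/4"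
    unfolding P1_def P2_def by (simp add: power2_eq_square algebra_simps)
  finally have telescope: "telescope_term c d = (d\<^sup>2 - c\<^sup>2 - 1/4) / (P1 * P2)" .
  have P12: "P1 * P2 = R\<^sup>2 + (R/2 + 1/16 - d\<^sup>2)"
    unfolding P1_def P2_def R_def by (simp add: power2_eq_square algebra_simps)
  have "(d\<^sup>2 - c\<^sup>2) * (P1 * P2) - (d\<^sup>2 - c\<^sup>2 - 1/4) * R\<^sup>2 = (d\<^sup>2 - c\<^sup>2) * (R/2 + 1/16 - d\<^sup>2) + R\<^sup>2/4"
    unfolding P12 by (simp add: power2_eq_square algebra_simps)
  moreover have "eisenstein_term c d = (d\<^sup>2 - c\<^sup>2) / R\<^sup>2"
    unfolding eisenstein_term_def R_def by simp
  ultimately show ?thesis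
    unfolding telescope P1_def[symmetric] P2_def[symmetric] using pos by (simp add: diff_frac_eq)
qed

lemma sq_le_four_times_sq_minus_half: "(real j)\<^sup>2 \<le> 4 * (real j - 1/2)\<^sup>2"
proof (cases "j = 0")
  case False
  then have "real j / 2 \<le> real j - 1/2"
    by simp
  then have "(real j / 2)\<^sup>2 \<le> (real j - 1/2)\<^sup>2"
    by (rule power_mono) simp
  then show ?thesis
    by (simp add: power_divide)
qed simp

lemma abs_eisenstein_minus_telescope_le:
  assumes c: "c \<ge> 1"
  shows "\<bar>eisenstein_term c (real j) - telescope_term c (real j)\<bar> \<le> 9 / (c\<^sup>2 * (1 + (real j)\<^sup>2))"
proof -
  define d where "d = real j"
  define R where "R = c\<^sup>2 + d\<^sup>2"
  define P1 P2 where "P1 = c\<^sup>2 + (d - 1/2)\<^sup>2" and "P2 = c\<^sup>2 + (d + 1/2)\<^sup>2"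
  define N where "N = (d\<^sup>2 - c\<^sup>2) * (R/2 + 1/16 - d\<^sup>2) + R\<^sup>2/4"
  have c2: "c\<^sup>2 \<ge> 1"
    using c by (simp add: one_le_power)
  have R1: "R \<ge> 1" and dR: "d\<^sup>2 \<le> R" "c\<^sup>2 \<le> R"
    unfolding R_def using c2 zero_le_power2[of d] by linarith+
  have P1: "R/4 \<le> P1"
    unfolding P1_def R_def d_def using sq_le_four_times_sq_minus_half[of j] c2 by simp
  have P2: "R \<le> P2"
    unfolding P2_def R_def d_def by (simp add: power2_eq_square algebra_simps)
  have "\<bar>d\<^sup>2 - c\<^sup>2\<bar> \<le> R" "\<bar>R/2 + 1/16 - d\<^sup>2\<bar> \<le> 2 * R"
    unfolding abs_le_iff using dR R1 zero_le_power2[of d] c2 by linarith+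
  then have "\<bar>(d\<^sup>2 - c\<^sup>2) * (R/2 + 1/16 - d\<^sup>2)\<bar> \<le> R * (2 * R)"
    unfolding abs_mult by (rule mult_mono) (use R1 in auto)
  moreover have "\<bar>N\<bar> \<le> \<bar>(d\<^sup>2 - c\<^sup>2) * (R/2 + 1/16 - d\<^sup>2)\<bar> + R\<^sup>2/4"
    unfolding N_def using abs_triangle_ineq[of _ "R\<^sup>2/4"] by simp
  ultimately have "\<bar>N\<bar> \<le> 9/4 * R\<^sup>2"
    by (simp add: power2_eq_square)
  moreover have "R\<^sup>2 * (R/4 * R) \<le> R\<^sup>2 * (P1 * P2)"
    by (intro mult_left_mono mult_mono P1 P2) (use R1 P1 in auto)
  moreover have diff: "eisenstein_term c d - telescope_term c d = N / (R\<^sup>2 * (P1 * P2))"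
    unfolding N_def R_def P1_def P2_def using eisenstein_minus_telescope_eq[of c d] c by simp
  ultimately have "\<bar>eisenstein_term c d - telescope_term c d\<bar> \<le> (9/4 * R\<^sup>2) / (R\<^sup>2 * (R/4 * R))"
    unfolding diff abs_divide using R1 P1 P2 by (intro frac_le) (auto simp: abs_mult)
  also have "\<dots> = 9 / R\<^sup>2"
    using R1 by (simp add: power2_eq_square field_simps)
  also have "\<dots> \<le> 9 / (c\<^sup>2 * (1 + d\<^sup>2))"
  proof (rule divide_left_mono)
    have "c\<^sup>2 * (1 + d\<^sup>2) \<le> R * R"
      by (rule mult_mono) (use dR c2 in \<open>auto simp: R_def\<close>)
    then show "c\<^sup>2 * (1 + d\<^sup>2) \<le> R\<^sup>2"
      by (simp add: power2_eq_square)
    show "0 < R\<^sup>2 * (c\<^sup>2 * (1 + d\<^sup>2))"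
      using R1 c by (simp add: add_pos_nonneg)
  qed simp
  finally show ?thesis
    unfolding d_def .
qed

lemma abs_regularized_eisenstein_le:
  "\<bar>regularized_eisenstein i j\<bar> \<le> (18 / (real (Suc i))\<^sup>2) * (2 / (real (Suc j))\<^sup>2)"
proof -
  define c where "c = real (Suc i)"
  have c: "c \<ge> 1" "c\<^sup>2 > 0"
    unfolding c_def by simp_all
  have w: "0 \<le> sym_weight j" "sym_weight j \<le> 2"
    unfolding sym_weight_def by auto
  have "\<bar>regularized_eisenstein i j\<bar> = sym_weight j * \<bar>eisenstein_term c j - telescope_term c j\<bar>"
    unfolding regularized_eisenstein_def c_def using w by (simp add: abs_mult)
  also have "\<dots> \<le> 2 * (9 / (c\<^sup>2 * (1 + (real j)\<^sup>2)))"
    by (rule mult_mono) (use w abs_eisenstein_minus_telescope_le[OF c(1)] in auto)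
  also have "\<dots> = (18 / c\<^sup>2) * (1 / (1 + (real j)\<^sup>2))"
    by simp
  also have "\<dots> \<le> (18 / c\<^sup>2) * (2 / (real (Suc j))\<^sup>2)"
  proof (rule mult_left_mono)
    have "(real j + 1)\<^sup>2 \<le> 2 * (1 + (real j)\<^sup>2)"
      using zero_le_power2[of "real j - 1"] by (simp add: power2_eq_square algebra_simps)
    then show "1 / (1 + (real j)\<^sup>2) \<le> 2 / (real (Suc j))\<^sup>2"
      by (simp add: divide_simps add_pos_nonneg add.commute)
  qed (use c in simp)
  finally show ?thesis
    unfolding c_def .
qed

lemma sums_eisenstein_row:
  assumes c: "c > 0"
  shows "(\<lambda>j. sym_weight j * eisenstein_term c (real j)) sums (- pi\<^sup>2 / (sinh (pi * c))\<^sup>2)"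
proof -
  have "(\<lambda>n. sym_weight (Suc n) * eisenstein_term c (real (Suc n))) sums csch_pf c"
    using summable_sums[OF summable_csch_pf_term[of c]]
    by (simp add: csch_pf_def sym_weight_def eisenstein_term_def csch_pf_term_def add.commute)
  then have "(\<lambda>j. sym_weight j * eisenstein_term c (real j)) sums (csch_pf c + sym_weight 0 * eisenstein_term c 0)"
    using sums_Suc_iff[of "\<lambda>j. sym_weight j * eisenstein_term c (real j)"] by simp
  also have "csch_pf c + sym_weight 0 * eisenstein_term c 0 = - pi\<^sup>2 / (sinh (pi * c))\<^sup>2"
    using c by (simp add: csch_pf_eq sym_weight_def eisenstein_term_def power2_eq_square)
  finally show ?thesis .
qed

lemma sums_telescope_row: "(\<lambda>j. sym_weight j * telescope_term c (real j)) sums 0"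
proof -
  define g where "g n = (real n + 1/2) / (c\<^sup>2 + (real n + 1/2)\<^sup>2)" for n :: nat
  have "g \<longlonglongrightarrow> 0"
    unfolding g_def by real_asymp
  then have "(\<lambda>n. 2 * (g n - g (Suc n))) sums (2 * (g 0 - 0))"
    by (intro sums_mult telescope_sums')
  moreover have "sym_weight (Suc n) * telescope_term c (real (Suc n)) = 2 * (g n - g (Suc n))" for n
    by (simp add: sym_weight_def telescope_term_def g_def add_ac)
  ultimately have "(\<lambda>n. sym_weight (Suc n) * telescope_term c (real (Suc n))) sums (2 * g 0)"
    by simp
  then have "(\<lambda>j. sym_weight j * telescope_term c (real j)) sums (2 * g 0 + sym_weight 0 * telescope_term c 0)"
    using sums_Suc_iff[of "\<lambda>j. sym_weight j * telescope_term c (real j)"] by simp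
  moreover have "sym_weight 0 * telescope_term c 0 = - 2 * g 0"
    by (simp add: sym_weight_def telescope_term_def g_def)
  ultimately show ?thesis
    by simp
qed

lemma sums_regularized_eisenstein_row:
  "(\<lambda>j. regularized_eisenstein i j) sums (- pi\<^sup>2 / (sinh (pi * real (Suc i)))\<^sup>2)"
  using sums_diff[OF sums_eisenstein_row sums_telescope_row, of "real (Suc i)"]
  unfolding regularized_eisenstein_def by (simp add: right_diff_distrib del: of_nat_Suc)

lemma sums_eisenstein_col:
  assumes "d > 0"
  shows "(\<lambda>i. eisenstein_term (real (Suc i)) d) sums (- csch_pf d / 2)"
proof -
  have "eisenstein_term (real (Suc i)) d = - (csch_pf_term i d / 2)" for i
    by (simp add: eisenstein_term_def csch_pf_term_def add.commute add_pos_nonneg field_simps)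
  then show ?thesis
    using sums_minus[OF sums_divide[OF summable_sums[OF summable_csch_pf_term[of d]], of 2]]
    by (simp add: csch_pf_def)
qed

lemma sums_telescope_col:
  "(\<lambda>i. telescope_term (real (Suc i)) d) sums ((coth_pf (d - 1/2) - coth_pf (d + 1/2)) / 2)"
proof -
  have "telescope_term (real (Suc i)) d = (coth_pf_term i (d - 1/2) - coth_pf_term i (d + 1/2)) / 2" for i
    by (simp add: telescope_term_def coth_pf_term_def add.commute add_pos_nonneg field_simps)
  then show ?thesis
    unfolding coth_pf_def
    by (simp only:) (intro sums_divide sums_diff summable_sums summable_coth_pf_term)
qed

lemma sums_regularized_eisenstein_col_0:
  "(\<lambda>i. regularized_eisenstein i 0) sums (- pi\<^sup>2 / 6 + coth_pf (1/2))"
proof -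
  have "eisenstein_term (real (Suc i)) 0 = - (1 / (real i + 1)\<^sup>2)" for i
    by (simp add: eisenstein_term_def power2_eq_square add_ac)
  then have "(\<lambda>i. eisenstein_term (real (Suc i)) 0) sums (- pi\<^sup>2 / 6)"
    using sums_minus[OF inverse_squares_sums] by (simp add: add.commute)
  from sums_diff[OF this sums_telescope_col[of 0]] show ?thesis
    unfolding regularized_eisenstein_def using coth_pf_minus[of "1/2"] by (simp add: sym_weight_def)
qed

lemma sums_regularized_eisenstein_col_Suc:
  "(\<lambda>i. regularized_eisenstein i (Suc m)) sums
     (- csch_pf (real (Suc m)) - (coth_pf (real m + 1/2) - coth_pf (real (Suc m) + 1/2)))"
proof -
  have "(\<lambda>i. 2 * (eisenstein_term (real (Suc i)) (real (Suc m))
      - telescope_term (real (Suc i)) (real (Suc m))))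
    sums (2 * (- csch_pf (real (Suc m)) / 2
      - (coth_pf (real (Suc m) - 1/2) - coth_pf (real (Suc m) + 1/2)) / 2))"
    by (intro sums_mult sums_diff sums_eisenstein_col sums_telescope_col) simp
  also have "real (Suc m) - 1/2 = real m + 1/2"
    by simp
  also have "2 * (- csch_pf (real (Suc m)) / 2
      - (coth_pf (real m + 1/2) - coth_pf (real (Suc m) + 1/2)) / 2)
    = - csch_pf (real (Suc m)) - (coth_pf (real m + 1/2) - coth_pf (real (Suc m) + 1/2))"
    by (simp add: field_simps)
  finally show ?thesis
    unfolding regularized_eisenstein_def sym_weight_def by (simp only: nat.distinct if_False)
qed

lemma sums_inverse_sinh_squared: "(\<lambda>i. 1 / (sinh (pi * real (Suc i)))\<^sup>2) sums (1/6 - 1 / (2 * pi))"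
proof -
  define s where "s i = 1 / (sinh (pi * real (Suc i)))\<^sup>2" for i
  define g where "g n = coth_pf (real n + 1/2)" for n
  define col where "col j = (case j of 0 \<Rightarrow> - pi\<^sup>2 / 6 + g 0
                             | Suc m \<Rightarrow> - csch_pf (real (Suc m)) - (g m - g (Suc m)))" for j
  have "\<exists>S. (\<lambda>i. - pi\<^sup>2 / (sinh (pi * real (Suc i)))\<^sup>2) sums S \<and> col sums S"
  proof (rule sums_swap_dominated[OF abs_regularized_eisenstein_le])
    show "summable (\<lambda>i. 18 / (real (Suc i))\<^sup>2)" "summable (\<lambda>j. 2 / (real (Suc j))\<^sup>2)"
      using summable_mult[OF summable_inverse_Suc_squared] by simp_all
    show "(\<lambda>i. regularized_eisenstein i j) sums col j" for j
      using sums_regularized_eisenstein_col_0 sums_regularized_eisenstein_col_Suc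
      by (cases j) (simp_all add: col_def g_def)
    show "(\<lambda>j. regularized_eisenstein i j) sums (- pi\<^sup>2 / (sinh (pi * real (Suc i)))\<^sup>2)" for i
      by (rule sums_regularized_eisenstein_row)
  qed simp_all
  then obtain S where rows: "(\<lambda>i. - pi\<^sup>2 * s i) sums S" and cols: "col sums S"
    unfolding s_def by auto
  have s: "s sums (- S / pi\<^sup>2)"
    using sums_divide[OF rows, of "- pi\<^sup>2"] by simp
  have "col (Suc m) = - (1 / (real m + 1)\<^sup>2) + pi\<^sup>2 * s m - (g m - g (Suc m))" for m
    using csch_pf_eq[of "real (Suc m)"] by (simp add: col_def s_def add.commute)
  moreover have "(\<lambda>m. - (1 / (real m + 1)\<^sup>2) + pi\<^sup>2 * s m - (g m - g (Suc m)))
      sums (- pi\<^sup>2 / 6 + pi\<^sup>2 * (- S / pi\<^sup>2) - (g 0 - pi))"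
  proof (rule sums_diff[OF sums_add[OF _ sums_mult[OF s]]])
    show "(\<lambda>m. - (1 / (real m + 1)\<^sup>2)) sums (- pi\<^sup>2 / 6)"
      using sums_minus[OF inverse_squares_sums] by (simp add: add.commute)
    show "(\<lambda>m. g m - g (Suc m)) sums (g 0 - pi)"
      unfolding g_def by (rule telescope_sums'[OF coth_pf_half_integer_tendsto])
  qed
  ultimately have "col sums (- pi\<^sup>2 / 6 - S - (g 0 - pi) + col 0)"
    by (simp add: sums_Suc_iff[symmetric])
  then have "S = - pi\<^sup>2 / 6 - S - (g 0 - pi) + col 0"
    using cols sums_unique2 by blast
  then have "- S / pi\<^sup>2 = 1/6 - 1 / (2 * pi)"
    by (simp add: col_def field_simps power2_eq_square)
  then show ?thesis
    using s unfolding s_def by simp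
qed

section \<open>A Lambert series at \<open>q = exp (-2\<pi>)\<close>\<close>

lemma summable_Suc_times_power:
  fixes r :: real
  assumes "\<bar>r\<bar> < 1"
  shows "summable (\<lambda>n. real (Suc n) * r ^ Suc n)"
  using summable_mult[OF sums_summable[OF geometric_deriv_sums], of r r] assms by (simp add: mult_ac)

lemma sums_lambert_swap:
  fixes x :: real
  assumes x: "0 < x" "x < 1"
  shows "\<exists>S. (\<lambda>n. real (Suc n) * x ^ Suc n / (1 - x ^ Suc n)) sums S \<and>
             (\<lambda>c. x ^ Suc c / (1 - x ^ Suc c)\<^sup>2) sums S"
proof (rule sums_swap_dominated)
  define W where "W n c = real (Suc n) * x ^ (Suc n * Suc c)" for n c
  have pow: "0 < x ^ Suc k" "x ^ Suc k < 1" for k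
    using x power_Suc_less_one[OF x] by simp_all
  show "\<bar>W n c\<bar> \<le> (real (Suc n) * x ^ Suc n) * x ^ c" for n c
  proof -
    have "x ^ (Suc n * Suc c) \<le> x ^ (Suc n + c)"
      by (rule power_decreasing) (use x in auto)
    then show ?thesis
      unfolding W_def using x by (simp add: abs_mult power_add mult_left_mono)
  qed
  show "summable (\<lambda>n. real (Suc n) * x ^ Suc n)"
    using x by (intro summable_Suc_times_power) simp
  show "summable (\<lambda>c. x ^ c)"
    by (rule summable_geometric) (use x in simp)
  show "(\<lambda>c. W n c) sums (real (Suc n) * x ^ Suc n / (1 - x ^ Suc n))" for n
  proof -
    have "(\<lambda>c. real (Suc n) * (x ^ Suc n * (x ^ Suc n) ^ c)) sums (real (Suc n) * (x ^ Suc n * (1 / (1 - x ^ Suc n))))"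
      using pow[of n] by (intro sums_mult geometric_sums) simp
    moreover have pw: "x ^ (Suc n * Suc c) = x ^ Suc n * (x ^ Suc n) ^ c" for c
      unfolding power_mult by (rule power_Suc)
    ultimately show ?thesis
      unfolding W_def pw by simp
  qed
  show "(\<lambda>n. W n c) sums (x ^ Suc c / (1 - x ^ Suc c)\<^sup>2)" for c
  proof -
    have "(\<lambda>n. x ^ Suc c * (of_nat (Suc n) * (x ^ Suc c) ^ n)) sums (x ^ Suc c * (1 / (1 - x ^ Suc c)\<^sup>2))"
      using pow[of c] by (intro sums_mult geometric_deriv_sums) simp
    moreover have pw: "x ^ (Suc n * Suc c) = x ^ Suc c * (x ^ Suc c) ^ n" for n
      by (simp only: mult.commute[of "Suc n"] power_mult power_Suc)
    ultimately show ?thesis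
      unfolding W_def pw by (simp add: mult_ac)
  qed
qed (use x in auto)

lemma inverse_sinh_squared_exp:
  fixes t :: real
  assumes "t \<noteq> 0"
  shows "1 / (sinh t)\<^sup>2 = 4 * (exp (-2 * t) / (1 - exp (-2 * t))\<^sup>2)"
proof -
  define E where "E = exp t"
  have E: "E > 0" "E * E \<noteq> 1"
    using assms unfolding E_def by (simp_all flip: exp_add)
  have "exp (-2 * t) = inverse E * inverse E"
    unfolding E_def by (simp flip: exp_minus exp_add)
  moreover have "sinh t = (E - inverse E) / 2"
    unfolding E_def sinh_field_def by (simp add: exp_minus)
  ultimately show ?thesis
    using E by (simp only:) (simp add: field_simps power2_eq_square)
qed

lemma sums_lambert_exp_neg_two_pi:
  "(\<lambda>n. real (Suc n) * exp (-2*pi) ^ Suc n / (1 - exp (-2*pi) ^ Suc n)) sums (1/24 - 1 / (8 * pi))"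
proof -
  obtain S where rows: "(\<lambda>n. real (Suc n) * exp (-2*pi) ^ Suc n / (1 - exp (-2*pi) ^ Suc n)) sums S"
    and cols: "(\<lambda>c. exp (-2*pi) ^ Suc c / (1 - exp (-2*pi) ^ Suc c)\<^sup>2) sums S"
    using sums_lambert_swap[of "exp (-2*pi)"] by auto
  have "exp (-2*pi) ^ Suc c / (1 - exp (-2*pi) ^ Suc c)\<^sup>2 = 1/4 * (1 / (sinh (pi * real (Suc c)))\<^sup>2)" for c
  proof -
    have "exp (-2*pi) ^ Suc c = exp (real (Suc c) * (-2*pi))"
      by (rule exp_of_nat_mult[symmetric])
    also have "\<dots> = exp (-2 * (pi * real (Suc c)))"
      by (simp add: algebra_simps)
    finally have "exp (-2*pi) ^ Suc c = exp (-2 * (pi * real (Suc c)))" .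
    then show ?thesis
      using inverse_sinh_squared_exp[of "pi * real (Suc c)"] by simp
  qed
  with cols have "(\<lambda>c. 1/4 * (1 / (sinh (pi * real (Suc c)))\<^sup>2)) sums S"
    by simp
  then have "S = 1/4 * (1/6 - 1 / (2 * pi))"
    using sums_unique2 sums_mult[OF sums_inverse_sinh_squared] by blast
  with rows show ?thesis
    by (simp add: field_simps)
qed

section \<open>\<open>f1\<close> on the imaginary axis\<close>

definition log_eta_factor :: "nat \<Rightarrow> real \<Rightarrow> real" where
  "log_eta_factor n t = ln (1 - exp (-2*pi*t) ^ Suc n)"

definition log_eta_factor_deriv :: "nat \<Rightarrow> real \<Rightarrow> real" where
  "log_eta_factor_deriv n t = 2*pi * real (Suc n) * (exp (-2*pi*t) ^ Suc n / (1 - exp (-2*pi*t) ^ Suc n))"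

definition f1_imag :: "real \<Rightarrow> real" where
  "f1_imag t = ln t - pi*t/3 + 4 * (\<Sum>n. log_eta_factor n t)"

definition f1_imag_deriv :: "real \<Rightarrow> real" where
  "f1_imag_deriv t = 1/t - pi/3 + 4 * (\<Sum>n. log_eta_factor_deriv n t)"

lemma exp_neg_two_pi_power_less_one: "t > 0 \<Longrightarrow> exp (-2*pi*t) ^ Suc n < 1"
  by (intro power_Suc_less_one) simp_all

lemma e_of_nat_mult_imag: "e (of_nat (Suc n) * Complex 0 t) = of_real (exp (-2*pi*t) ^ Suc n)"
proof -
  have "2 * of_real pi * \<i> * (of_nat (Suc n) * Complex 0 t) = of_real (real (Suc n) * (-2*pi*t))"
    by (simp add: Complex_eq algebra_simps)
  then show ?thesis
    unfolding e_def by (simp only: exp_of_real exp_of_nat_mult)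
qed

lemma e_imag_div_6: "e (Complex 0 t / 6) = of_real (exp (-pi*t/3))"
proof -
  have "2 * of_real pi * \<i> * (Complex 0 t / 6) = of_real (-pi*t/3)"
    by (simp add: Complex_eq algebra_simps)
  then show ?thesis
    unfolding e_def by (simp only: exp_of_real)
qed

lemma has_real_derivative_log_eta_factor:
  assumes "t > 0"
  shows "(log_eta_factor n has_real_derivative log_eta_factor_deriv n t) (at t)"
proof -
  have "(log_eta_factor n has_real_derivative
      1 / (1 - exp (-2*pi*t) ^ Suc n) * - (real (Suc n) * exp (-2*pi*t) ^ n * (exp (-2*pi*t) * - (2*pi))))
      (at t)"
    unfolding log_eta_factor_def[abs_def]
    using exp_neg_two_pi_power_less_one[OF assms, of n]
    by (auto intro!: derivative_eq_intros simp: field_simps simp del: power_Suc)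
  then show ?thesis
    by (simp add: log_eta_factor_deriv_def field_simps del: of_nat_Suc)
qed

lemma abs_ln_one_minus_le:
  fixes y :: real
  assumes "0 \<le> y" "y < 1"
  shows "\<bar>ln (1 - y)\<bar> \<le> y / (1 - y)"
proof -
  have "ln (1 / (1 - y)) \<le> 1 / (1 - y) - 1"
    by (rule ln_le_minus_one) (use assms in simp)
  then show ?thesis
    using assms by (simp add: ln_div field_simps)
qed

lemma power_div_one_minus_power_le:
  fixes y r :: real
  assumes "0 \<le> y" "y \<le> r" "r < 1"
  shows "y ^ Suc n / (1 - y ^ Suc n) \<le> r ^ Suc n / (1 - r)"
proof (rule frac_le)
  show "y ^ Suc n \<le> r ^ Suc n"
    by (rule power_mono) (use assms in auto)
  moreover have "r ^ Suc n \<le> r"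
    using assms by (simp add: power_le_one mult_left_le)
  ultimately show "1 - r \<le> 1 - y ^ Suc n"
    by simp
qed (use assms in auto)

lemma summable_log_eta_factor:
  assumes t: "t > 0"
  shows "summable (\<lambda>n. log_eta_factor n t)"
proof (rule summable_comparison_test'[of "\<lambda>n. exp (-2*pi*t) ^ Suc n / (1 - exp (-2*pi*t))" 0])
  show "summable (\<lambda>n. exp (-2*pi*t) ^ Suc n / (1 - exp (-2*pi*t)))"
    using t by (intro summable_divide summable_mult summable_geometric) simp
  show "norm (log_eta_factor n t) \<le> exp (-2*pi*t) ^ Suc n / (1 - exp (-2*pi*t))" for n
    unfolding log_eta_factor_def real_norm_def
    using abs_ln_one_minus_le[of "exp (-2*pi*t) ^ Suc n"] exp_neg_two_pi_power_less_one[OF t, of n]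
      power_div_one_minus_power_le[of "exp (-2*pi*t)" "exp (-2*pi*t)" n] t
    by force
qed

lemma abs_log_eta_factor_deriv_le:
  assumes "0 < a" "a \<le> s"
  shows "\<bar>log_eta_factor_deriv n s\<bar> \<le> 2*pi * real (Suc n) * (exp (-2*pi*a) ^ Suc n / (1 - exp (-2*pi*a)))"
proof -
  define y where "y = exp (-2*pi * s) ^ Suc n"
  have y: "0 \<le> y" "y < 1"
    unfolding y_def using assms exp_neg_two_pi_power_less_one[of s n] by auto
  have "\<bar>log_eta_factor_deriv n s\<bar> = 2*pi * real (Suc n) * (y / (1 - y))"
    unfolding log_eta_factor_deriv_def y_def[symmetric] using y by (simp add: abs_mult)
  also have "\<dots> \<le> 2*pi * real (Suc n) * (exp (-2*pi*a) ^ Suc n / (1 - exp (-2*pi*a)))"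
    unfolding y_def using assms by (intro mult_left_mono power_div_one_minus_power_le) auto
  finally show ?thesis .
qed

lemma summable_log_eta_factor_deriv_bound:
  assumes "a > 0"
  shows "summable (\<lambda>n. 2*pi * real (Suc n) * (exp (-2*pi*a) ^ Suc n / (1 - exp (-2*pi*a))))"
  unfolding mult.assoc times_divide_eq_right
  by (intro summable_mult summable_divide summable_Suc_times_power) (use assms in simp)

lemma summable_log_eta_factor_deriv:
  assumes "t > 0"
  shows "summable (\<lambda>n. log_eta_factor_deriv n t)"
  by (rule summable_comparison_test'[OF summable_log_eta_factor_deriv_bound[OF assms], of 0])
     (use abs_log_eta_factor_deriv_le[OF assms order_refl] in simp)

lemma log_eta_factor_deriv_strict_antimono:
  assumes "0 < s" "s < t"
  shows "log_eta_factor_deriv n t < log_eta_factor_deriv n s"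
proof -
  define y z where "y = exp (-2*pi*t) ^ Suc n" and "z = exp (-2*pi * s) ^ Suc n"
  have "y < z"
    unfolding y_def z_def using assms by (intro power_strict_mono) auto
  moreover have "0 < y" "z < 1"
    unfolding y_def z_def using assms exp_neg_two_pi_power_less_one by auto
  ultimately have "y / (1 - y) < z / (1 - z)"
    by (simp add: frac_less2 divide_strict_right_mono)
  then show ?thesis
    unfolding log_eta_factor_deriv_def y_def[symmetric] z_def[symmetric]
    by (intro mult_strict_left_mono) simp_all
qed

lemma has_real_derivative_f1_imag:
  assumes t: "t > 0"
  shows "(f1_imag has_real_derivative f1_imag_deriv t) (at t)"
proof -
  define a where "a = t / 2"
  have a: "0 < a" "a < t"
    unfolding a_def using t by auto
  have "((\<lambda>x. \<Sum>n. log_eta_factor n x) has_real_derivative (\<Sum>n. log_eta_factor_deriv n t)) (at t)"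
  proof (rule has_real_derivative_suminf[of "{a<..}" t t])
    show "\<bar>log_eta_factor_deriv n y\<bar> \<le> 2*pi * real (Suc n) * (exp (-2*pi*a) ^ Suc n / (1 - exp (-2*pi*a)))"
      if "y \<in> {a<..}" for n y
      using that a by (intro abs_log_eta_factor_deriv_le) auto
    show "summable (\<lambda>n. 2*pi * real (Suc n) * (exp (-2*pi*a) ^ Suc n / (1 - exp (-2*pi*a))))"
      by (rule summable_log_eta_factor_deriv_bound[OF a(1)])
  qed (use a t in \<open>auto intro: has_real_derivative_log_eta_factor summable_log_eta_factor\<close>)
  then show ?thesis
    unfolding f1_imag_def[abs_def] f1_imag_deriv_def
    by (intro derivative_eq_intros refl) (use t in auto)
qed

lemma f1_imag_deriv_strict_antimono:
  assumes "0 < s" "s < t"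
  shows "f1_imag_deriv t < f1_imag_deriv s"
proof -
  have "0 < (\<Sum>n. log_eta_factor_deriv n s - log_eta_factor_deriv n t)"
    using assms log_eta_factor_deriv_strict_antimono[OF assms]
    by (intro suminf_pos summable_diff summable_log_eta_factor_deriv) auto
  also have "\<dots> = (\<Sum>n. log_eta_factor_deriv n s) - (\<Sum>n. log_eta_factor_deriv n t)"
    using assms by (intro suminf_diff[symmetric] summable_log_eta_factor_deriv) auto
  moreover have "1 / t < 1 / s"
    using assms by (intro divide_strict_left_mono) auto
  ultimately show ?thesis
    unfolding f1_imag_deriv_def by simp
qed

lemma f1_imag_deriv_1: "f1_imag_deriv 1 = 0"
proof -
  have "log_eta_factor_deriv n 1 = 2*pi * (real (Suc n) * exp (-2*pi) ^ Suc n / (1 - exp (-2*pi) ^ Suc n))" for n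
    by (simp add: log_eta_factor_deriv_def)
  then have "(\<lambda>n. log_eta_factor_deriv n 1) sums (2*pi * (1/24 - 1 / (8 * pi)))"
    using sums_mult[OF sums_lambert_exp_neg_two_pi, of "2*pi"] by presburger
  moreover have "2*pi * (1/24 - 1 / (8 * pi)) = pi/12 - 1/4"
    by (simp add: field_simps)
  ultimately have "(\<Sum>n. log_eta_factor_deriv n 1) = pi/12 - 1/4"
    by (simp add: sums_iff)
  then show ?thesis
    unfolding f1_imag_deriv_def by simp
qed

lemma f1_Complex_0:
  assumes t: "t > 0"
  shows "f1 (Complex 0 t) = f1_imag t"
proof -
  define L where "L = (\<Sum>n. log_eta_factor n t)"
  have L: "(\<lambda>n. complex_of_real (4 * log_eta_factor n t)) sums complex_of_real (4 * L)"
    unfolding L_def by (intro sums_of_real sums_mult summable_sums summable_log_eta_factor t)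
  have "(1 - e (of_nat (Suc n) * Complex 0 t)) ^ 4 = exp (complex_of_real (4 * log_eta_factor n t))" for n
  proof -
    have "0 < 1 - exp (-2*pi*t) ^ Suc n"
      using exp_neg_two_pi_power_less_one[OF t] by simp
    then have "exp (log_eta_factor n t) = 1 - exp (-2*pi*t) ^ Suc n"
      unfolding log_eta_factor_def by simp
    moreover have "exp (4 * log_eta_factor n t) = exp (log_eta_factor n t) ^ 4"
      using exp_of_nat_mult[of 4 "log_eta_factor n t"] by simp
    ultimately have "exp (complex_of_real (4 * log_eta_factor n t)) = of_real ((1 - exp (-2*pi*t) ^ Suc n) ^ 4)"
      by (simp only: exp_of_real)
    then show ?thesis
      unfolding e_of_nat_mult_imag by simp
  qed
  then have "(\<Prod>n. (1 - e (of_nat (Suc n) * Complex 0 t)) ^ 4) = exp (complex_of_real (4 * L))"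
    using prodinf_exp[OF sums_summable[OF L]] sums_unique[OF L] by simp
  then have "eta (Complex 0 t) = complex_of_real (exp (-pi*t/3 + 4 * L))"
    unfolding eta_def e_imag_div_6 by (simp flip: exp_of_real exp_add)
  then show ?thesis
    unfolding f1_def f1_imag_def L_def[symmetric] using t by (simp add: norm_mult ln_mult)
qed

theorem lemma4p2:
  shows "(\<forall>y>0. (\<lambda>t. f1 (Complex 0 t)) differentiable (at y)) \<and>
         (\<forall>y>0. deriv (\<lambda>t. f1 (Complex 0 t)) y = 0 \<longleftrightarrow> y = 1) \<and>
         (\<forall>y. 0 < y \<and> y < 1 \<longrightarrow> Y1 (Complex 0 y) > 0) \<and>
         (\<forall>y>1. Y1 (Complex 0 y) < 0)"
proof -
  have has_deriv: "((\<lambda>t. f1 (Complex 0 t)) has_real_derivative f1_imag_deriv y) (at y)" if "y > 0" for y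
    by (rule has_field_derivative_transform_within_open[OF has_real_derivative_f1_imag[OF that], of "{0<..}"])
       (use that f1_Complex_0 in auto)
  have deriv: "deriv (\<lambda>t. f1 (Complex 0 t)) y = f1_imag_deriv y" if "y > 0" for y
    using has_deriv[OF that] by (rule DERIV_imp_deriv)
  have Y1: "Y1 (Complex 0 y) = deriv (\<lambda>t. f1 (Complex 0 t)) y" for y
    unfolding Y1_def by simp
  have pos: "f1_imag_deriv y > 0" if "0 < y" "y < 1" for y
    using f1_imag_deriv_strict_antimono[OF that] f1_imag_deriv_1 by simp
  have neg: "f1_imag_deriv y < 0" if "1 < y" for y
    using f1_imag_deriv_strict_antimono[OF _ that] f1_imag_deriv_1 by simp
  have "deriv (\<lambda>t. f1 (Complex 0 t)) y = 0 \<longleftrightarrow> y = 1" if "y > 0" for y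
    using pos[OF that] neg[of y] f1_imag_deriv_1 unfolding deriv[OF that]
    by (cases y "1::real" rule: linorder_cases) auto
  moreover have "(\<lambda>t. f1 (Complex 0 t)) differentiable (at y)" if "y > 0" for y
    using has_deriv[OF that] by (auto intro: differentiableI simp: has_field_derivative_def)
  ultimately show ?thesis
    using Y1 deriv pos neg by auto
qed

end
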